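(* Let $n\ge 1$, let $a_1,\dots,a_n$ be positive integers, let $b\ge 0$ be an integer, and let $M$ be the least common multiple of $a_1,\dots,a_n$. Put $d_i=M/a_i$ for $i=1,\dots,n$, and $$f(t_1,\dots,t_n,t_{n+1})=\frac{1}{M}\Bigl(b-\sum_{i=1}^n a_it_i-t_{n+1}\Bigr).$$ Let $Q(b)$ be the number of $n$-tuples $(x_1,\dots,x_n)$ of non-negative integers with $\sum_{i=1}^n a_ix_i\le b$. Then $$Q(b)=\sum_{t_1=0}^{d_1-1}\cdots\sum_{t_n=0}^{d_n-1}\sum_{t_{n+1}=0}^{M-1} C\bigl(f(t_1,\dots,t_n,t_{n+1})+1;\,n\bigr).$$
   Context: For a real number $k$ and a non-negative integer $l$, define $C(k;l)=\frac{1}{l!}\,k(k+1)\cdots(k+l-1)$ if $k$ is a positive integer (natural number), and $C(k;l)=0$ otherwise (in particular $C(k;l)=0$ whenever $k$ is not an integer or $k\le 0$). *)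

theory Defs
  imports Main "HOL-Computational_Algebra.Computational_Algebra"
begin

definition Cnum :: "real \<Rightarrow> nat \<Rightarrow> real" where
  "Cnum k l = (if k \<in> \<int> \<and> k > 0 then pochhammer k l / fact l else 0)"

end

theory Submission
  imports Defs
begin

text \<open>Write each \<open>x\<^sub>i = d\<^sub>i q\<^sub>i + t\<^sub>i\<close> with \<open>0 \<le> t\<^sub>i < d\<^sub>i\<close>. Since \<open>a\<^sub>i d\<^sub>i = M\<close>, the constraint
  \<open>\<Sum> a\<^sub>i x\<^sub>i \<le> b\<close> becomes \<open>M \<Sum> q\<^sub>i \<le> b - \<Sum> a\<^sub>i t\<^sub>i\<close>, so by stars and bars the residue class \<open>t\<close>
  contains \<open>(K + n choose n)\<close> points, where \<open>K = \<lfloor>(b - \<Sum> a\<^sub>i t\<^sub>i) / M\<rfloor>\<close>, and none if \<open>K < 0\<close>.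
  In the inner sum over \<open>s < M\<close> the argument of \<open>C\<close> is an integer only for
  \<open>s \<equiv> b - \<Sum> a\<^sub>i t\<^sub>i (mod M)\<close>, where it equals \<open>K + 1\<close>, and \<open>C(K + 1; n) = (K + n choose n)\<close>.\<close>

definition vanishing_outside :: "'a set \<Rightarrow> ('a \<Rightarrow> 'b::zero) set" where
  "vanishing_outside I = {x. \<forall>i. i \<notin> I \<longrightarrow> x i = 0}"

lemma finite_vanishing_outside_sum_le:
  assumes "finite I"
  shows "finite {q \<in> vanishing_outside I. sum q I \<le> (K::nat)}"
proof (rule finite_subset)
  show "finite {f. \<forall>i. (i \<in> I \<longrightarrow> f i \<in> {..K}) \<and> (i \<notin> I \<longrightarrow> f i = 0)}"
    using assms by (intro finite_set_of_finite_funs) auto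
  show "{q \<in> vanishing_outside I. sum q I \<le> K}
        \<subseteq> {f. \<forall>i. (i \<in> I \<longrightarrow> f i \<in> {..K}) \<and> (i \<notin> I \<longrightarrow> f i = 0)}"
    by (auto simp: vanishing_outside_def intro: order_trans[OF member_le_sum[OF _ _ assms]])
qed

lemma card_vanishing_outside_sum_le:
  assumes "finite I"
  shows "card {q \<in> vanishing_outside I. sum q I \<le> K} = (K + card I) choose card I"
  using assms
proof (induction I arbitrary: K rule: finite_induct)
  case empty
  have empty_eq: "{q \<in> vanishing_outside {}. sum q {} \<le> K} = {\<lambda>_. 0 :: nat}"
    by (auto simp: vanishing_outside_def)
  show ?case unfolding empty_eq by simp
next
  case (insert i I)
  let ?S = "\<lambda>I K. {q \<in> vanishing_outside I. sum q I \<le> (K::nat)}"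
  have sum_upd: "(\<Sum>j\<in>I. if j = i then c else x j) = sum x I" for x :: "_ \<Rightarrow> nat" and c
    using insert.hyps(2) by (intro sum.cong) auto
  have "bij_betw (\<lambda>x. (x i, x(i := 0))) (?S (insert i I) K) (SIGMA j:{..K}. ?S I (K - j))"
    by (rule bij_betw_byWitness[where f' = "\<lambda>(j, q). q(i := j)"])
       (auto simp: vanishing_outside_def sum_upd insert.hyps)
  then have "card (?S (insert i I) K) = (\<Sum>j\<le>K. card (?S I (K - j)))"
    using finite_vanishing_outside_sum_le[OF insert.hyps(1)]
    by (simp add: bij_betw_same_card)
  also have "\<dots> = (\<Sum>j\<le>K. (card I + (K - j)) choose card I)"
    by (simp add: insert.IH add.commute)
  also have "\<dots> = (\<Sum>j\<le>K. (card I + j) choose card I)"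
    by (rule sum.reindex_bij_witness[where i="\<lambda>j. K - j" and j="\<lambda>j. K - j"]) auto
  also have "\<dots> = (K + card (insert i I)) choose card (insert i I)"
    using choose_rising_sum(1)[of "card I" K] insert.hyps by (simp add: add_ac)
  finally show ?case .
qed

lemma finite_vanishing_outside_weighted_sum_le:
  assumes "finite I" "\<forall>i\<in>I. 0 < a i"
  shows "finite {x \<in> vanishing_outside I. (\<Sum>i\<in>I. a i * x i) \<le> (b::nat)}"
proof (rule finite_subset[OF _ finite_vanishing_outside_sum_le[OF assms(1), of b]])
  have "sum x I \<le> (\<Sum>i\<in>I. a i * x i)" for x
    using assms(2) by (intro sum_mono) (simp add: Suc_le_eq)
  then show "{x \<in> vanishing_outside I. (\<Sum>i\<in>I. a i * x i) \<le> b} \<subseteq> {q \<in> vanishing_outside I. sum q I \<le> b}"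
    using order_trans by blast
qed

definition residue_vector :: "'a set \<Rightarrow> ('a \<Rightarrow> nat) \<Rightarrow> ('a \<Rightarrow> nat) \<Rightarrow> 'a \<Rightarrow> nat" where
  "residue_vector I d x = (\<lambda>i. if i \<in> I then x i mod d i else 0)"

lemma card_eq_sum_card_residue_classes:
  assumes "finite I" "finite X" "\<forall>i\<in>I. 0 < d i"
  shows "card X = (\<Sum>t\<in>{t \<in> vanishing_outside I. \<forall>i\<in>I. t i < d i}.
                      card {x \<in> X. residue_vector I d x = t})"
proof -
  let ?T = "{t \<in> vanishing_outside I. \<forall>i\<in>I. t i < d i}"
  have finite_T: "finite ?T"
    by (rule finite_subset[OF _ finite_set_of_finite_funs[OF assms(1) finite_atMost[of "Max (d ` I)"], of 0]])
       (use assms(1) in \<open>auto simp: vanishing_outside_def intro: less_imp_le order_trans[OF _ Max_ge]\<close>)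
  have residues_in_T: "residue_vector I d ` X \<subseteq> ?T"
    using assms(3) by (auto simp: residue_vector_def vanishing_outside_def)
  show ?thesis
    using sum.group[OF assms(2) finite_T residues_in_T, of "\<lambda>_. 1 :: nat"]
    by (simp only: card_eq_sum)
qed

lemma residue_class_parametrization:
  fixes a d t :: "'a \<Rightarrow> nat"
  assumes ad: "\<forall>i\<in>I. a i * d i = M" and d: "\<forall>i\<in>I. 0 < d i"
    and t: "t \<in> vanishing_outside I" "\<forall>i\<in>I. t i < d i"
  shows "bij_betw (\<lambda>q i. d i * q i + t i)
           {q \<in> vanishing_outside I. M * sum q I + (\<Sum>i\<in>I. a i * t i) \<le> b}
           {x \<in> vanishing_outside I. (\<Sum>i\<in>I. a i * x i) \<le> b \<and> residue_vector I d x = t}"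
    (is "bij_betw ?f ?Q ?X")
proof (rule bij_betw_byWitness[where f' = "\<lambda>x i. x i div d i"])
  have weighted_sum: "(\<Sum>i\<in>I. a i * (d i * q i + t i)) = M * sum q I + (\<Sum>i\<in>I. a i * t i)" for q
  proof -
    have "(\<Sum>i\<in>I. a i * (d i * q i + t i)) = (\<Sum>i\<in>I. M * q i + a i * t i)"
      using ad by (intro sum.cong) (auto simp: distrib_left mult.assoc[symmetric])
    then show ?thesis
      by (simp add: sum.distrib sum_distrib_left)
  qed
  have decompose: "d i * (x i div d i) + t i = x i"
    if "x \<in> vanishing_outside I" "residue_vector I d x = t" for x i
    using that t(1) by (cases "i \<in> I") (auto simp: vanishing_outside_def residue_vector_def)
  have recover: "(d i * q i + t i) div d i = q i" if "q \<in> vanishing_outside I" for q i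
    using that d t by (cases "i \<in> I") (auto simp: vanishing_outside_def)
  show "\<forall>q\<in>?Q. (\<lambda>i. (d i * q i + t i) div d i) = q"
    using recover by auto
  show "\<forall>x\<in>?X. (\<lambda>i. d i * (x i div d i) + t i) = x"
    using decompose by auto
  show "?f ` ?Q \<subseteq> ?X"
    using t weighted_sum by (auto simp: vanishing_outside_def residue_vector_def fun_eq_iff)
  show "(\<lambda>x i. x i div d i) ` ?X \<subseteq> ?Q"
  proof (rule image_subsetI)
    fix x assume x: "x \<in> ?X"
    then have "M * (\<Sum>i\<in>I. x i div d i) + (\<Sum>i\<in>I. a i * t i) = (\<Sum>i\<in>I. a i * x i)"
      using weighted_sum[of "\<lambda>i. x i div d i"] decompose by simp
    with x show "(\<lambda>i. x i div d i) \<in> ?Q"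
      by (auto simp: vanishing_outside_def)
  qed
qed

lemma card_residue_class:
  fixes a d t :: "'a \<Rightarrow> nat"
  assumes "finite I" "0 < M" "\<forall>i\<in>I. a i * d i = M"
    and "t \<in> vanishing_outside I" "\<forall>i\<in>I. t i < d i"
  shows "card {x \<in> vanishing_outside I. (\<Sum>i\<in>I. a i * x i) \<le> b \<and> residue_vector I d x = t}
       = (if (\<Sum>i\<in>I. a i * t i) \<le> b
          then ((b - (\<Sum>i\<in>I. a i * t i)) div M + card I) choose card I else 0)"
proof -
  define A where "A = (\<Sum>i\<in>I. a i * t i)"
  have "\<forall>i\<in>I. 0 < d i"
    using assms(2,3) by (metis mult_0_right neq0_conv)
  then have "card {x \<in> vanishing_outside I. (\<Sum>i\<in>I. a i * x i) \<le> b \<and> residue_vector I d x = t}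
           = card {q \<in> vanishing_outside I. M * sum q I + A \<le> b}"
    unfolding A_def using bij_betw_same_card[OF residue_class_parametrization[OF assms(3) _ assms(4,5)]]
    by simp
  also have "{q \<in> vanishing_outside I. M * sum q I + A \<le> b}
           = (if A \<le> b then {q \<in> vanishing_outside I. sum q I \<le> (b - A) div M} else {})"
  proof -
    have "M * k + A \<le> b \<longleftrightarrow> A \<le> b \<and> k \<le> (b - A) div M" for k
      using less_eq_div_iff_mult_less_eq[OF assms(2), of k "b - A"] by (auto simp: mult.commute)
    then show ?thesis
      by auto
  qed
  finally show ?thesis
    using card_vanishing_outside_sum_le[OF assms(1), of "(b - A) div M"] by (simp add: A_def)
qed

lemma Cnum_of_int_plus_one:
  "Cnum (real_of_int k + 1) n = (if 0 \<le> k then real ((nat k + n) choose n) else 0)"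
proof (cases "0 \<le> k")
  case True
  have "real ((nat k + n) choose n) = real (nat k + n) gchoose n"
    by (rule binomial_gbinomial)
  also have "\<dots> = pochhammer (real_of_int k + 1) n / fact n"
    using True by (simp add: gbinomial_pochhammer')
  finally show ?thesis
    using True by (simp add: Cnum_def)
qed (simp add: Cnum_def)

lemma shifted_quotient_in_Ints_iff:
  assumes "s < M"
  shows "(real_of_int D - real s) / real M \<in> \<int> \<longleftrightarrow> int s = D mod int M"
proof
  assume "(real_of_int D - real s) / real M \<in> \<int>"
  then obtain k where "(real_of_int D - real s) / real M = real_of_int k"
    by (elim Ints_cases)
  then have "real_of_int (D - int s) = real_of_int (int M * k)"
    using assms by (simp add: field_simps)
  then have "D = int M * k + int s"
    by (simp only: of_int_eq_iff)
  then show "int s = D mod int M"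
    using assms by simp
next
  assume "int s = D mod int M"
  then have "D - int s = int M * (D div int M)"
    by (metis minus_mod_eq_mult_div)
  then have "real_of_int D - real s = real M * real_of_int (D div int M)"
    by (metis of_int_diff of_int_mult of_int_of_nat_eq)
  then show "(real_of_int D - real s) / real M \<in> \<int>"
    using assms by simp
qed

lemma sum_Cnum_shifted_quotients:
  assumes "0 < M"
  shows "(\<Sum>s<M. Cnum ((real_of_int D - real s) / real M + 1) n)
       = Cnum (real_of_int (D div int M) + 1) n"
proof -
  define f where "f s = Cnum ((real_of_int D - real s) / real M + 1) n" for s
  define r where "r = nat (D mod int M)"
  have r: "r < M" "int r = D mod int M"
    using assms by (auto simp: r_def nat_less_iff)
  have quotient: "(real_of_int D - real r) / real M = real_of_int (D div int M)"
  proof -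
    have "D = int M * (D div int M) + int r"
      using r(2) by simp
    then have "real_of_int D = real M * real_of_int (D div int M) + real r"
      by (metis of_int_add of_int_mult of_int_of_nat_eq)
    then show ?thesis
      using assms by (simp add: field_simps)
  qed
  have "(\<Sum>s<M. f s) = f r + (\<Sum>s\<in>{..<M} - {r}. f s)"
    using r(1) by (intro sum.remove) auto
  also have "(\<Sum>s\<in>{..<M} - {r}. f s) = 0"
    using r shifted_quotient_in_Ints_iff[of _ M D] by (intro sum.neutral) (auto simp: f_def Cnum_def)
  finally show ?thesis
    using quotient by (simp add: f_def)
qed

lemma sum_Cnum_shifted_quotients_nat:
  assumes "0 < M"
  shows "(\<Sum>s<M. Cnum ((real b - real A - real s) / real M + 1) k)
       = (if A \<le> b then real (((b - A) div M + k) choose k) else 0)"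
proof -
  have "(\<Sum>s<M. Cnum ((real b - real A - real s) / real M + 1) k)
      = Cnum (real_of_int ((int b - int A) div int M) + 1) k"
    using sum_Cnum_shifted_quotients[OF assms, of "int b - int A" k] by simp
  also have "\<dots> = (if A \<le> b then real (((b - A) div M + k) choose k) else 0)"
  proof (cases "A \<le> b")
    case True
    then have "(int b - int A) div int M = int ((b - A) div M)"
      by (simp add: zdiv_int)
    with True show ?thesis
      using Cnum_of_int_plus_one[of "int ((b - A) div M)" k] by simp
  next
    case False
    then have "(int b - int A) div int M < 0"
      using assms by (simp add: div_neg_pos_less0)
    with False show ?thesis
      by (simp add: Cnum_of_int_plus_one)
  qed
  finally show ?thesis .
qed

theorem mainTheorem2:
  fixes n :: nat and a :: "nat \<Rightarrow> nat" and b :: nat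
  assumes "n \<ge> 1"
    and "\<forall>i\<in>{1..n}. a i > 0"
  shows "real (card {x :: nat \<Rightarrow> nat. (\<forall>i. i \<notin> {1..n} \<longrightarrow> x i = 0)
                      \<and> (\<Sum>i=1..n. a i * x i) \<le> b})
       = (\<Sum>t\<in>{t :: nat \<Rightarrow> nat. (\<forall>i\<in>{1..n}. t i < Lcm (a ` {1..n}) div a i)
                                 \<and> (\<forall>i. i \<notin> {1..n} \<longrightarrow> t i = 0)}.
            \<Sum>s<Lcm (a ` {1..n}).
              Cnum ((real b - (\<Sum>i=1..n. real (a i) * real (t i)) - real s)
                      / real (Lcm (a ` {1..n})) + 1) n)"
proof -
  define M where "M = Lcm (a ` {1..n})"
  define d where "d i = M div a i" for i
  let ?X = "{x \<in> vanishing_outside {1..n}. (\<Sum>i=1..n. a i * x i) \<le> b}"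
  let ?T = "{t \<in> vanishing_outside {1..n}. \<forall>i\<in>{1..n}. t i < d i}"
  have M_pos: "0 < M"
  proof -
    have "0 \<notin> a ` {1..n}"
      using assms(2) by fastforce
    then show ?thesis
      unfolding M_def by (metis Lcm_0_iff finite_atLeastAtMost finite_imageI neq0_conv)
  qed
  have ad: "\<forall>i\<in>{1..n}. a i * d i = M"
    by (simp add: d_def M_def dvd_Lcm)
  then have d_pos: "\<forall>i\<in>{1..n}. 0 < d i"
    using M_pos by (metis mult_0_right neq0_conv)
  have "real (card ?X) = (\<Sum>t\<in>?T. real (card {x \<in> ?X. residue_vector {1..n} d x = t}))"
    using card_eq_sum_card_residue_classes[OF _ finite_vanishing_outside_weighted_sum_le[OF _ assms(2)] d_pos]
    by simp
  also have "\<dots> = (\<Sum>t\<in>?T. \<Sum>s<M.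
                   Cnum ((real b - (\<Sum>i=1..n. real (a i) * real (t i)) - real s) / real M + 1) n)"
  proof (rule sum.cong[OF refl])
    fix t assume "t \<in> ?T"
    then show "real (card {x \<in> ?X. residue_vector {1..n} d x = t}) = (\<Sum>s<M.
                 Cnum ((real b - (\<Sum>i=1..n. real (a i) * real (t i)) - real s) / real M + 1) n)"
      using card_residue_class[OF _ M_pos ad, of t b] sum_Cnum_shifted_quotients_nat[OF M_pos]
      by (simp add: conj_assoc flip: of_nat_mult of_nat_sum)
  qed
  finally show ?thesis
    by (simp add: vanishing_outside_def M_def d_def conj_commute)
qed

end
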